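(* The sequence $\left\{\dfrac{\exp(H_n)\log(H_n)}{n}\right\}_{n=1}^\infty$ is monotonically increasing.
   Context: $H_n=1+\frac12+\cdots+\frac1n$ is the $n$-th harmonic number. *)

theory Defs
  imports "HOL-Analysis.Analysis"
begin

end

theory Submission
  imports Defs
begin

text \<open>
  Write \<open>H = H\<^sub>n\<close>, \<open>m = n + 1\<close> and \<open>H' = H\<^sub>m = H + 1/m\<close>. Since \<open>exp (1/m) \<ge> (m + 1)/m\<close>,
  the step from \<open>n\<close> to \<open>m\<close> reduces to \<open>m\<^sup>2 ln H \<le> (m\<^sup>2 - 1) ln H'\<close>, i.e.
  \<open>ln H' \<le> m\<^sup>2 (ln H' - ln H)\<close>. Concavity of the logarithm gives
  \<open>ln H' - ln H \<ge> 1/(m H')\<close>, so it suffices that \<open>H' ln H' \<le> m\<close>. This follows from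
  \<open>ln H' \<le> H' - 1\<close> and the elementary bound \<open>H\<^sub>m (H\<^sub>m - 1) \<le> m\<close>, which in turn comes
  from \<open>2 H\<^sub>m \<le> m + 1\<close> by induction.
\<close>

lemma mono_on_atLeast_SucI:
  fixes f :: "nat \<Rightarrow> 'a::preorder"
  assumes "\<And>n. k \<le> n \<Longrightarrow> f n \<le> f (Suc n)"
  shows "mono_on {k..} f"
proof (rule mono_onI)
  fix a b assume "a \<in> {k..}" "a \<le> b"
  then have "k \<le> a" by simp
  from \<open>a \<le> b\<close> show "f a \<le> f b"
  proof (induction b rule: dec_induct)
    case (step i)
    then show ?case using assms[of i] \<open>k \<le> a\<close> by (auto intro: order_trans)
  qed simp
qed

lemma ln_le_square_mult_ln_diff:
  fixes x m :: real
  assumes "1 \<le> x" "0 < m" and y_ln_y: "(x + 1/m) * ln (x + 1/m) \<le> m"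
  shows "ln (x + 1/m) \<le> m\<^sup>2 * (ln (x + 1/m) - ln x)"
proof -
  define y where "y = x + 1/m"
  have "y > 0" using assms by (simp add: y_def add_pos_pos)
  have "ln x - ln y \<le> (x - y) / y"
    using assms \<open>y > 0\<close> by (intro ln_diff_le) auto
  also have "(x - y) / y = - 1 / (m * y)" by (simp add: y_def)
  finally have "1 / (m * y) \<le> ln y - ln x" by simp
  have "ln y \<le> m / y"
    using y_ln_y \<open>y > 0\<close> by (simp add: y_def field_simps)
  also have "m / y = m\<^sup>2 * (1 / (m * y))"
    using \<open>0 < m\<close> by (simp add: power2_eq_square)
  also have "\<dots> \<le> m\<^sup>2 * (ln y - ln x)"
    using \<open>1 / (m * y) \<le> ln y - ln x\<close> by (intro mult_left_mono) auto
  finally show ?thesis by (simp add: y_def)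
qed

lemma exp_mult_ln_div_le_shift:
  fixes x m :: real
  assumes "1 \<le> x" "1 < m" and y_ln_y: "(x + 1/m) * ln (x + 1/m) \<le> m"
  shows "exp x * ln x / (m - 1) \<le> exp (x + 1/m) * ln (x + 1/m) / m"
proof -
  define y where "y = x + 1/m"
  have "1 \<le> y" using assms by (simp add: y_def add_increasing2)
  have "m\<^sup>2 * ln x \<le> (m\<^sup>2 - 1) * ln y"
    using ln_le_square_mult_ln_diff[OF assms(1) _ y_ln_y] \<open>1 < m\<close>
    by (simp add: y_def algebra_simps)
  then have "ln x / (m - 1) \<le> (1 + 1/m) * ln y / m"
    using \<open>1 < m\<close> by (simp add: field_simps power2_eq_square)
  also have "\<dots> \<le> exp (1/m) * ln y / m"
    using \<open>1 < m\<close> \<open>1 \<le> y\<close> exp_ge_add_one_self[of "1/m"]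
    by (intro divide_right_mono mult_right_mono) (auto simp: add.commute)
  finally have "exp x * (ln x / (m - 1)) \<le> exp x * (exp (1/m) * ln y / m)"
    by (rule mult_left_mono) simp
  then show ?thesis by (simp add: y_def exp_add)
qed

lemma harm_ge_one: "1 \<le> n \<Longrightarrow> (1::real) \<le> harm n"
  using harm_mono[of 1 n] by (simp add: harm_def)

lemma two_mult_harm_le: "2 * (harm n :: real) \<le> real n + 1"
proof (induction n)
  case 0 then show ?case by (simp add: harm_def)
next
  case (Suc n)
  have "2 * inverse (real (Suc n)) \<le> 1" if "n \<noteq> 0" using that by (simp add: field_simps)
  then show ?case using Suc by (cases "n = 0") (auto simp: harm_Suc harm_def)
qed

lemma harm_mult_harm_minus_one_le: "(harm n :: real) * (harm n - 1) \<le> real n"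
proof (induction n)
  case 0 then show ?case by (simp add: harm_def)
next
  case (Suc n)
  define H where "H = (harm n :: real)"
  define d where "d = inverse (real (Suc n))"
  have "0 < d" "d \<le> 1" "d * real (Suc n) = 1" by (auto simp: d_def field_simps)
  have "(H + d) * (H + d - 1) = H * (H - 1) + d * (2 * H + d - 1)"
    by (simp add: algebra_simps)
  also have "d * (2 * H + d - 1) \<le> d * real (Suc n)"
    using two_mult_harm_le[of n] \<open>0 < d\<close> \<open>d \<le> 1\<close> by (intro mult_left_mono) (auto simp: H_def)
  finally show ?case
    using Suc \<open>d * real (Suc n) = 1\<close> by (simp add: H_def d_def harm_Suc add.commute)
qed

lemma harm_mult_ln_harm_le:
  assumes "1 \<le> n"
  shows "(harm n :: real) * ln (harm n) \<le> real n"
proof -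
  have "1 \<le> (harm n :: real)" using harm_ge_one[OF assms] .
  then have "harm n * ln (harm n) \<le> (harm n :: real) * (harm n - 1)"
    using assms by (intro mult_left_mono ln_le_minus_one) auto
  also have "\<dots> \<le> real n" by (rule harm_mult_harm_minus_one_le)
  finally show ?thesis .
qed

theorem mainTheorem18:
  shows "mono_on {1..} (\<lambda>n::nat. exp (harm n :: real) * ln (harm n) / real n)"
proof (rule mono_on_atLeast_SucI)
  fix n :: nat assume "1 \<le> n"
  have harm_Suc': "harm (Suc n) = (harm n :: real) + 1 / real (Suc n)"
    by (simp add: harm_Suc divide_inverse)
  have "exp (harm n) * ln (harm n) / (real (Suc n) - 1)
        \<le> exp (harm (Suc n)) * ln (harm (Suc n)) / real (Suc n)"
    unfolding harm_Suc'
    using \<open>1 \<le> n\<close> harm_ge_one harm_mult_ln_harm_le[of "Suc n"]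
    by (intro exp_mult_ln_div_le_shift) (auto simp: harm_Suc')
  then show "exp (harm n :: real) * ln (harm n) / real n
             \<le> exp (harm (Suc n)) * ln (harm (Suc n)) / real (Suc n)"
    by simp
qed

end
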